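(* Let $X,Y,X',Y'$ be topological spaces and $g\colon X'\to X$, $h\colon Y\to Y'$ continuous maps, and let $t\colon C(X,Y)\to C(X',Y')$, $t(a)=h\circ a\circ g$, with induced homomorphism $\mathbb Zt\colon\mathbb Z[C(X,Y)]\to\mathbb Z[C(X',Y')]$. Then $\theta((\mathbb Zt)(A))\ge\theta(A)$ for every $A\in\mathbb Z[C(X,Y)]$.
   Context: $C(X,Y)$ is the set of continuous maps; $\mathbb Z[S]$ is the free abelian group on a set $S$. For $A=\sum m_ae_a\in\mathbb Z[C(X,Y)]$ and $Z\subset X$, $A|_Z=\sum m_ae_{a|_Z}\in\mathbb Z[C(Z,Y)]$, and $\theta(A)=\inf\{\#V: V\subset X\text{ finite},\ A|_V\ne0\}\in\mathbb N\cup\{\infty\}$. *)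

theory Defs
  imports "HOL-Analysis.Analysis" "HOL-Library.Extended_Nat"
begin

definition cmaps :: "'a topology \<Rightarrow> 'b topology \<Rightarrow> ('a \<Rightarrow> 'b) set" where
  "cmaps X Y = {f. continuous_map X Y f \<and> f \<in> extensional (topspace X)}"

text \<open>Elements of the free abelian group Z[S]: finitely supported integer coefficient functions on S.\<close>
definition free_ab :: "'s set \<Rightarrow> ('s \<Rightarrow> int) set" where
  "free_ab S = {A. finite {s. A s \<noteq> 0} \<and> {s. A s \<noteq> 0} \<subseteq> S}"

text \<open>Induced homomorphism Z[S] \<rightarrow> Z[T] of a map f : S \<rightarrow> T (sum m_a e_a \<mapsto> sum m_a e_{f a}).\<close>
definition push :: "('s \<Rightarrow> 't) \<Rightarrow> ('s \<Rightarrow> int) \<Rightarrow> ('t \<Rightarrow> int)" where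
  "push f A = (\<lambda>b. \<Sum>a\<in>{a. A a \<noteq> 0 \<and> f a = b}. A a)"

definition restr_chain :: "'a set \<Rightarrow> (('a \<Rightarrow> 'b) \<Rightarrow> int) \<Rightarrow> (('a \<Rightarrow> 'b) \<Rightarrow> int)" where
  "restr_chain Z A = push (\<lambda>a. restrict a Z) A"

text \<open>theta(A) = inf { #V : V \<subseteq> X finite, A|_V \<noteq> 0 } (\<infinity> if no such V).\<close>
definition theta :: "'a topology \<Rightarrow> (('a \<Rightarrow> 'b) \<Rightarrow> int) \<Rightarrow> enat" where
  "theta X A = (INF V \<in> {V. finite V \<and> V \<subseteq> topspace X \<and> restr_chain V A \<noteq> (\<lambda>_. 0)}. enat (card V))"

end

theory Submission
  imports Defs
begin

text \<open>
  For a finite \<open>V' \<subseteq> X'\<close>, the restriction to \<open>V'\<close> of \<open>h \<circ> a \<circ> g\<close> depends only on the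
  restriction of \<open>a\<close> to \<open>W = g ` V'\<close>, so the restriction of \<open>(\<int>t)(A)\<close> to \<open>V'\<close> is a push-forward
  of \<open>A|\<^sub>W\<close>. Hence \<open>(\<int>t)(A)|\<^sub>V\<^sub>' \<noteq> 0\<close> forces \<open>A|\<^sub>W \<noteq> 0\<close>, and \<open>#W \<le> #V'\<close>.
\<close>

lemma push_comp:
  assumes "finite {a. A a \<noteq> 0}"
  shows "push f (push g A) = push (f \<circ> g) A"
proof
  fix b
  define S where "S = {a. A a \<noteq> 0}"
  define T where "T = {c \<in> g ` S. f c = b}"
  have finS: "finite S" and finT: "finite T"
    using assms by (simp_all add: S_def T_def)
  have push_g: "push g A c = (\<Sum>a\<in>{a\<in>S. g a = c}. A a)" for c
    unfolding push_def S_def by simp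
  have "push (f \<circ> g) A b = (\<Sum>a\<in>{a\<in>S. f (g a) = b}. A a)"
    unfolding push_def S_def by simp
  also have "\<dots> = (\<Sum>c\<in>T. \<Sum>a\<in>{x\<in>{a\<in>S. f (g a) = b}. g x = c}. A a)"
    by (rule sum.group[symmetric]) (use finS finT T_def in auto)
  also have "\<dots> = (\<Sum>c\<in>T. push g A c)"
    by (rule sum.cong) (auto simp: push_g T_def intro!: sum.cong)
  also have "\<dots> = (\<Sum>c\<in>{c. push g A c \<noteq> 0 \<and> f c = b}. push g A c)"
  proof (rule sum.mono_neutral_right[OF finT])
    show "{c. push g A c \<noteq> 0 \<and> f c = b} \<subseteq> T"
    proof
      fix c assume c: "c \<in> {c. push g A c \<noteq> 0 \<and> f c = b}"
      then have "{a\<in>S. g a = c} \<noteq> {}"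
        using push_g[of c] by (cases "{a\<in>S. g a = c} = {}") simp_all
      with c show "c \<in> T" by (auto simp: T_def)
    qed
  qed (auto simp: T_def)
  also have "\<dots> = push f (push g A) b"
    unfolding push_def by simp
  finally show "push f (push g A) b = push (f \<circ> g) A b" by simp
qed

lemma push_zero: "push f (\<lambda>_. 0) = (\<lambda>_. (0::int))"
  unfolding push_def by simp

lemma restr_chain_push_nonzero:
  assumes "finite {a. A a \<noteq> 0}"
    and "(\<lambda>a. restrict a V) \<circ> t = \<phi> \<circ> (\<lambda>a. restrict a W)"
    and "restr_chain V (push t A) \<noteq> (\<lambda>_. 0)"
  shows "restr_chain W A \<noteq> (\<lambda>_. 0)"
proof
  assume "restr_chain W A = (\<lambda>_. 0)"
  then have "push \<phi> (restr_chain W A) = (\<lambda>_. 0)"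
    by (simp add: push_zero)
  moreover have "restr_chain V (push t A) = push \<phi> (restr_chain W A)"
    unfolding restr_chain_def using push_comp[OF assms(1)] assms(2) by metis
  ultimately show False
    using assms(3) by simp
qed

lemma restrict_comp_restrict_image:
  assumes "V \<subseteq> S"
  shows "(\<lambda>a. restrict a V) \<circ> (\<lambda>a. restrict (h \<circ> a \<circ> g) S)
    = (\<lambda>b. restrict (h \<circ> b \<circ> g) V) \<circ> (\<lambda>a. restrict a (g ` V))"
  using assms by (auto simp: restrict_def fun_eq_iff)

lemma theta_le_card:
  assumes "finite V" "V \<subseteq> topspace X" "restr_chain V A \<noteq> (\<lambda>_. 0)"
  shows "theta X A \<le> enat (card V)"
  unfolding theta_def by (rule INF_lower) (use assms in auto)

theorem mainTheorem14:
  fixes X :: "'a topology" and Y :: "'b topology"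
    and X' :: "'c topology" and Y' :: "'d topology"
    and g :: "'c \<Rightarrow> 'a" and h :: "'b \<Rightarrow> 'd"
    and A :: "('a \<Rightarrow> 'b) \<Rightarrow> int"
  assumes "continuous_map X' X g" and "continuous_map Y Y' h"
    and "A \<in> free_ab (cmaps X Y)"
  shows "theta X' (push (\<lambda>a. restrict (h \<circ> a \<circ> g) (topspace X')) A) \<ge> theta X A"
  unfolding theta_def[of X']
proof (rule INF_greatest, clarify)
  fix V'
  assume V': "finite V'" "V' \<subseteq> topspace X'"
    and nonzero: "restr_chain V' (push (\<lambda>a. restrict (h \<circ> a \<circ> g) (topspace X')) A) \<noteq> (\<lambda>_. 0)"
  have "finite {a. A a \<noteq> 0}"
    using assms(3) by (simp add: free_ab_def)
  then have "restr_chain (g ` V') A \<noteq> (\<lambda>_. 0)"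
    using restr_chain_push_nonzero restrict_comp_restrict_image[OF V'(2)] nonzero by metis
  moreover have "g ` V' \<subseteq> topspace X"
    using V'(2) continuous_map_image_subset_topspace[OF assms(1)] by blast
  ultimately have "theta X A \<le> enat (card (g ` V'))"
    using V'(1) by (intro theta_le_card) auto
  also have "\<dots> \<le> enat (card V')"
    using card_image_le[OF V'(1)] by simp
  finally show "theta X A \<le> enat (card V')" .
qed

end
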